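(* Let $G$ be a finite graph with $d \geq 2$ vertices satisfying: (1) $G$ is connected; (2) $G$ is simple; (3) $G$ is strictly subtrivalent; (4) the shortest path between any two distinct vertices of degree $3$ contains at least $3$ edges; (5) $G$ contains no triangle. Let $g = m - d + 1$, where $m$ is the number of edges of $G$. Then $d \geq 2g+2$.
   Context: A graph is strictly subtrivalent if every vertex has degree at most $3$ and at least one vertex has degree less than $3$. The quantity $g = m-d+1 = h^1(G,k)$ (the first Betti number of $G$ viewed as a $1$-dimensional simplicial complex) is called the genus of $G$; it is not the graph-theoretic genus. *)

theory Defs
  imports Main
begin

text \<open>A finite graph with vertex set V and edge set E; simplicity (no loops, no multiple
edges) is built in by representing every edge as a two-element subset of V.\<close>

definition simple_graph :: "'a set \<Rightarrow> 'a set set \<Rightarrow> bool" where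
  "simple_graph V E \<longleftrightarrow> finite V \<and>
     (\<forall>e\<in>E. \<exists>u v. u \<noteq> v \<and> u \<in> V \<and> v \<in> V \<and> e = {u, v})"

definition degree :: "'a set set \<Rightarrow> 'a \<Rightarrow> nat" where
  "degree E v = card {e \<in> E. v \<in> e}"

text \<open>A walk is a nonempty list of vertices, consecutive ones joined by an edge;
its length (number of edges) is length xs - 1.\<close>
definition is_walk :: "'a set set \<Rightarrow> 'a list \<Rightarrow> bool" where
  "is_walk E xs \<longleftrightarrow> xs \<noteq> [] \<and> (\<forall>i. Suc i < length xs \<longrightarrow> {xs ! i, xs ! Suc i} \<in> E)"

definition connected_graph :: "'a set \<Rightarrow> 'a set set \<Rightarrow> bool" where
  "connected_graph V E \<longleftrightarrow>
     (\<forall>u\<in>V. \<forall>v\<in>V. \<exists>xs. is_walk E xs \<and> hd xs = u \<and> last xs = v)"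

definition strictly_subtrivalent :: "'a set \<Rightarrow> 'a set set \<Rightarrow> bool" where
  "strictly_subtrivalent V E \<longleftrightarrow>
     (\<forall>v\<in>V. degree E v \<le> 3) \<and> (\<exists>v\<in>V. degree E v < 3)"

text \<open>Every walk (hence the shortest path) between two distinct vertices of degree 3
has at least 3 edges.\<close>
definition trivalent_vertices_far :: "'a set \<Rightarrow> 'a set set \<Rightarrow> bool" where
  "trivalent_vertices_far V E \<longleftrightarrow>
     (\<forall>u\<in>V. \<forall>v\<in>V. u \<noteq> v \<and> degree E u = 3 \<and> degree E v = 3 \<longrightarrow>
        (\<forall>xs. is_walk E xs \<and> hd xs = u \<and> last xs = v \<longrightarrow> length xs - 1 \<ge> 3))"

definition triangle_free :: "'a set \<Rightarrow> 'a set set \<Rightarrow> bool" where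
  "triangle_free V E \<longleftrightarrow>
     \<not> (\<exists>a\<in>V. \<exists>b\<in>V. \<exists>c\<in>V. a \<noteq> b \<and> b \<noteq> c \<and> a \<noteq> c \<and>
           {a, b} \<in> E \<and> {b, c} \<in> E \<and> {a, c} \<in> E)"

definition graph_genus :: "'a set \<Rightarrow> 'a set set \<Rightarrow> int" where
  "graph_genus V E = int (card E) - int (card V) + 1"

end

theory Submission
  imports Defs
begin

text \<open>With deficiency 3 - deg v, the handshake lemma turns d - (2g + 2) into the total
deficiency minus 4, so it suffices to find total deficiency 4. Without a vertex of degree 3
every vertex contributes at least 1, which settles d \<ge> 4, and triangle-freeness settles
d \<le> 3. A vertex v of degree 3 has three neighbours, none of degree 3; either one of them
has degree 1, or it has a second neighbour, which lies at distance 2 from v (hence is not of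
degree 3) and is no neighbour of v (no triangles): four deficient vertices.\<close>

definition neighbours :: "'a set set \<Rightarrow> 'a \<Rightarrow> 'a set" where
  "neighbours E v = {u. {v, u} \<in> E}"

definition deficiency :: "'a set set \<Rightarrow> 'a \<Rightarrow> int" where
  "deficiency E v = 3 - int (degree E v)"

lemma simple_graph_edge_cases:
  assumes "simple_graph V E" "e \<in> E" "v \<in> e"
  obtains u where "u \<noteq> v" "u \<in> V" "v \<in> V" "e = {v, u}"
  using assms unfolding simple_graph_def by (metis insert_commute insert_iff singletonD)

lemma simple_graph_finite_edges:
  assumes "simple_graph V E"
  shows "finite E"
proof (rule finite_subset)
  show "E \<subseteq> Pow V"
  proof
    fix e assume "e \<in> E"
    with assms obtain u w where "u \<in> V" "w \<in> V" "e = {u, w}"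
      unfolding simple_graph_def by blast
    then show "e \<in> Pow V" by simp
  qed
  show "finite (Pow V)"
    using assms unfolding simple_graph_def by simp
qed

lemma neighbours_subset:
  assumes "simple_graph V E" "u \<in> neighbours E v"
  shows "u \<in> V" "v \<in> V" "u \<noteq> v"
  using assms simple_graph_edge_cases[of V E "{v, u}" v]
  unfolding neighbours_def by (auto simp: doubleton_eq_iff)

lemma degree_eq_card_neighbours:
  assumes "simple_graph V E"
  shows "degree E v = card (neighbours E v)"
proof -
  have "bij_betw (\<lambda>u. {v, u}) (neighbours E v) {e \<in> E. v \<in> e}"
  proof (rule bij_betwI')
    show "{v, u} = {v, w} \<longleftrightarrow> u = w" for u w
      by (auto simp: doubleton_eq_iff)
    show "\<exists>u \<in> neighbours E v. e = {v, u}" if "e \<in> {e \<in> E. v \<in> e}" for e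
      using that simple_graph_edge_cases[OF assms] unfolding neighbours_def by (metis mem_Collect_eq)
  qed (auto simp: neighbours_def)
  then show ?thesis
    unfolding degree_def by (simp add: bij_betw_same_card)
qed

lemma sum_degree_eq_twice_card_edges:
  assumes "simple_graph V E"
  shows "(\<Sum>v\<in>V. degree E v) = 2 * card E"
proof -
  have fV: "finite V" and fE: "finite E"
    using assms simple_graph_finite_edges unfolding simple_graph_def by blast+
  have "(\<Sum>v\<in>V. degree E v) = (\<Sum>v\<in>V. \<Sum>e\<in>E. if v \<in> e then 1 else 0)"
    unfolding degree_def by (simp add: sum.If_cases[OF fE] Int_def)
  also have "\<dots> = (\<Sum>e\<in>E. \<Sum>v\<in>V. if v \<in> e then 1 else 0)"
    by (rule sum.swap)
  also have "\<dots> = (\<Sum>e\<in>E. 2)"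
  proof (rule sum.cong[OF refl])
    fix e assume "e \<in> E"
    then obtain u w where "u \<noteq> w" "u \<in> V" "w \<in> V" "e = {u, w}"
      using assms unfolding simple_graph_def by blast
    then have "V \<inter> {v. v \<in> e} = {u, w}" by auto
    with \<open>u \<noteq> w\<close> show "(\<Sum>v\<in>V. if v \<in> e then 1 else 0) = (2::nat)"
      by (simp add: sum.If_cases[OF fV])
  qed
  finally show ?thesis by simp
qed

lemma genus_bound_iff_deficiency:
  assumes "simple_graph V E"
  shows "int (card V) - (2 * graph_genus V E + 2) = (\<Sum>v\<in>V. deficiency E v) - 4"
proof -
  have "(\<Sum>v\<in>V. int (degree E v)) = 2 * int (card E)"
    using sum_degree_eq_twice_card_edges[OF assms] by (metis of_nat_mult of_nat_numeral of_nat_sum)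
  then show ?thesis
    unfolding deficiency_def graph_genus_def by (simp add: sum_subtractf)
qed

lemma card_edges_le_1_if_card_2:
  assumes "simple_graph V E" "card V = 2"
  shows "card E \<le> 1"
proof -
  obtain p q where V: "V = {p, q}" "p \<noteq> q"
    using assms(2) by (auto simp: card_2_iff)
  have "E \<subseteq> {{p, q}}"
    using assms(1) V unfolding simple_graph_def by (auto simp: doubleton_eq_iff)
  then show ?thesis
    using card_mono[of "{{p, q}}" E] by simp
qed

lemma card_edges_le_2_if_triangle_free_card_3:
  assumes "simple_graph V E" "triangle_free V E" "card V = 3"
  shows "card E \<le> 2"
proof -
  obtain p q r where V: "V = {p, q, r}" "p \<noteq> q" "q \<noteq> r" "p \<noteq> r"
    using assms(3) by (auto simp: card_3_iff)
  define T where "T = {{p, q}, {q, r}, {p, r}}"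
  have "E \<subseteq> T"
    using assms(1) V unfolding simple_graph_def T_def by (auto simp: doubleton_eq_iff)
  moreover obtain t where "t \<in> T" "t \<notin> E"
    using assms(2) V unfolding triangle_free_def T_def by blast
  ultimately have "E \<subseteq> T - {t}" by blast
  moreover have "card (T - {t}) \<le> 2"
  proof -
    have "card T \<le> 3"
      unfolding T_def by (rule card_insert_le_m1) (simp_all add: card_insert_le_m1)
    then show ?thesis
      using \<open>t \<in> T\<close> by (simp add: card_Diff_singleton)
  qed
  ultimately show ?thesis
    using card_mono[of "T - {t}" E] unfolding T_def by simp
qed

lemma is_walk_edge: "{x, y} \<in> E \<Longrightarrow> is_walk E [x, y]"
  unfolding is_walk_def by (auto simp: less_Suc_eq)

lemma is_walk_two_edges: "{x, y} \<in> E \<Longrightarrow> {y, z} \<in> E \<Longrightarrow> is_walk E [x, y, z]"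
  unfolding is_walk_def by (auto simp: less_Suc_eq nth_Cons split: nat.splits)

lemma trivalent_far_neighbour:
  assumes "simple_graph V E" "trivalent_vertices_far V E" "degree E v = 3"
    and "u \<in> neighbours E v"
  shows "degree E u \<noteq> 3"
  using assms neighbours_subset[OF assms(1,4)] is_walk_edge[of v u E]
  unfolding trivalent_vertices_far_def neighbours_def by fastforce

lemma trivalent_far_second_neighbour:
  assumes "simple_graph V E" "trivalent_vertices_far V E" "degree E v = 3"
    and "a \<in> neighbours E v" "x \<in> neighbours E a" "x \<noteq> v"
  shows "degree E x \<noteq> 3"
  using assms neighbours_subset[OF assms(1,4)] neighbours_subset[OF assms(1,5)]
    is_walk_two_edges[of v a E x]
  unfolding trivalent_vertices_far_def neighbours_def by fastforce

lemma triangle_free_common_neighbours: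
  assumes "simple_graph V E" "triangle_free V E"
    and a: "a \<in> neighbours E v" and b: "b \<in> neighbours E v" and "a \<noteq> b"
  shows "b \<notin> neighbours E a"
proof
  assume "b \<in> neighbours E a"
  then have "{v, a} \<in> E" "{a, b} \<in> E" "{v, b} \<in> E"
    using a b unfolding neighbours_def by auto
  moreover have "v \<in> V" "a \<in> V" "b \<in> V" "v \<noteq> a" "v \<noteq> b"
    using neighbours_subset[OF assms(1) a] neighbours_subset[OF assms(1) b] by auto
  ultimately show False
    using assms(2) \<open>a \<noteq> b\<close> unfolding triangle_free_def by blast
qed

lemma deficiency_sum_ge_4_if_trivalent_vertex:
  assumes sg: "simple_graph V E" and le3: "\<forall>x\<in>V. degree E x \<le> 3"
    and far: "trivalent_vertices_far V E" and tf: "triangle_free V E"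
    and v: "v \<in> V" "degree E v = 3"
  shows "(\<Sum>x\<in>V. deficiency E x) \<ge> 4"
proof -
  have sum_subset: "(\<Sum>x\<in>S. deficiency E x) \<le> (\<Sum>x\<in>V. deficiency E x)" if "S \<subseteq> V" for S
    using sg le3 that unfolding simple_graph_def deficiency_def by (intro sum_mono2) auto
  have deficient: "deficiency E x \<ge> 1" if "x \<in> V" "degree E x \<noteq> 3" for x
    using le3 that unfolding deficiency_def by fastforce
  obtain a b c where N: "neighbours E v = {a, b, c}" "a \<noteq> b" "b \<noteq> c" "a \<noteq> c"
    using v(2) by (auto simp: degree_eq_card_neighbours[OF sg] card_3_iff)
  then have abc: "a \<in> neighbours E v" "b \<in> neighbours E v" "c \<in> neighbours E v"
    by auto
  have abc_deficient: "deficiency E y \<ge> 1" if "y \<in> neighbours E v" for y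
    using deficient trivalent_far_neighbour[OF sg far v(2) that] neighbours_subset[OF sg that]
    by blast
  show ?thesis
  proof (cases "degree E a \<le> 1")
    case True
    then have "deficiency E a \<ge> 2" unfolding deficiency_def by simp
    then have "(\<Sum>y\<in>{a, b, c}. deficiency E y) \<ge> 4"
      using N abc_deficient[OF abc(2)] abc_deficient[OF abc(3)] by simp
    then show ?thesis
      using sum_subset[of "{a, b, c}"] abc neighbours_subset[OF sg] by fastforce
  next
    case False
    then have "card (neighbours E a) \<ge> 2"
      using degree_eq_card_neighbours[OF sg] by simp
    have "neighbours E a - {v} \<noteq> {}"
    proof
      assume "neighbours E a - {v} = {}"
      then have "card (neighbours E a) \<le> card {v}"
        by (intro card_mono) auto
      with \<open>card (neighbours E a) \<ge> 2\<close> show False by simp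
    qed
    then obtain x where x: "x \<in> neighbours E a" "x \<noteq> v"
      by blast
    have "x \<noteq> b" "x \<noteq> c"
      using triangle_free_common_neighbours[OF sg tf] abc N x(1) by auto
    moreover have "x \<noteq> a"
      using neighbours_subset[OF sg x(1)] by simp
    moreover have "deficiency E x \<ge> 1"
      using deficient trivalent_far_second_neighbour[OF sg far v(2) abc(1) x]
        neighbours_subset[OF sg x(1)] by blast
    ultimately have "(\<Sum>y\<in>{a, b, c, x}. deficiency E y) \<ge> 4"
      using N abc_deficient[OF abc(1)] abc_deficient[OF abc(2)] abc_deficient[OF abc(3)] by simp
    then show ?thesis
      using sum_subset[of "{a, b, c, x}"] abc x(1) neighbours_subset[OF sg] by fastforce
  qed
qed

lemma deficiency_sum_ge_4_if_subtrivalent: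
  assumes sg: "simple_graph V E" and le2: "\<forall>x\<in>V. degree E x \<le> 2"
    and tf: "triangle_free V E" and "card V \<ge> 2"
  shows "(\<Sum>x\<in>V. deficiency E x) \<ge> 4"
proof -
  have "int (card V) - (2 * graph_genus V E + 2) = (\<Sum>x\<in>V. deficiency E x) - 4"
    by (rule genus_bound_iff_deficiency[OF sg])
  then have sum_eq: "(\<Sum>x\<in>V. deficiency E x) = 3 * int (card V) - 2 * int (card E)"
    unfolding graph_genus_def by simp
  consider "card V = 2" | "card V = 3" | "card V \<ge> 4"
    using \<open>card V \<ge> 2\<close> by linarith
  then show ?thesis
  proof cases
    case 1
    with card_edges_le_1_if_card_2[OF sg] show ?thesis
      using sum_eq by simp
  next
    case 2
    with card_edges_le_2_if_triangle_free_card_3[OF sg tf] show ?thesis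
      using sum_eq by simp
  next
    case 3
    have "(\<Sum>x\<in>V. 1) \<le> (\<Sum>x\<in>V. deficiency E x)"
      using le2 unfolding deficiency_def by (intro sum_mono) fastforce
    with 3 show ?thesis by simp
  qed
qed

theorem lemma1p2:
  fixes V :: "'a set" and E :: "'a set set"
  assumes "simple_graph V E"
    and "card V \<ge> 2"
    and "connected_graph V E"
    and "strictly_subtrivalent V E"
    and "trivalent_vertices_far V E"
    and "triangle_free V E"
  shows "int (card V) \<ge> 2 * graph_genus V E + 2"
proof -
  have le3: "\<forall>x\<in>V. degree E x \<le> 3"
    using assms(4) unfolding strictly_subtrivalent_def by blast
  have "(\<Sum>x\<in>V. deficiency E x) \<ge> 4"
  proof (cases "\<exists>v\<in>V. degree E v = 3")
    case True
    then show ?thesis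
      using deficiency_sum_ge_4_if_trivalent_vertex[OF assms(1) le3 assms(5,6)] by blast
  next
    case False
    with le3 have "\<forall>x\<in>V. degree E x \<le> 2" by fastforce
    then show ?thesis
      using deficiency_sum_ge_4_if_subtrivalent[OF assms(1) _ assms(6,2)] by blast
  qed
  then show ?thesis
    using genus_bound_iff_deficiency[OF assms(1)] by linarith
qed

end
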